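(* Let $I$ be a nonempty open real interval and let $(f,g)\in\mathscr{B}_0(I)$. For $n\in\mathbb{N}$, $x=(x_1,\dots,x_n)\in I^n$ and $\lambda=(\lambda_1,\dots,\lambda_n)\in\Lambda_n$ write \[ B_{g,f}(x,\lambda):=\Big(\frac{g}{f}\Big)^{-1}\!\left(\frac{\sum_{i=1}^n\lambda_ig(x_i)}{\sum_{i=1}^n\lambda_if(x_i)}\right),\qquad A_h(x,\lambda):=h^{-1}\!\left(\frac{\sum_{i=1}^n\lambda_ih(x_i)}{\sum_{i=1}^n\lambda_i}\right), \] and $B_{g,f}(x)$, $A_h(x)$ for the case $\lambda_1=\dots=\lambda_n=1$. Consider the statements: (i) There exists a continuous strictly monotone $h:I\to\mathbb{R}$ such that $B_{g,f}(x,\lambda)=A_h(x,\lambda)$ for all $n\in\mathbb{N}$, $x\in I^n$, $\lambda\in\Lambda_n$. (ii) There exists a continuous strictly monotone $h:I\to\mathbb{R}$ such that $B_{g,f}(x)=A_h(x)$ for all $n\in\mathbb{N}$ and $x\in I^n$. (iii) There exist a continuous strictly monotone $h:I\to\mathbb{R}$ and $n\geq3$ such that $B_{g,f}(x)=A_h(x)$ for all $x\in I^n$. (iv) There exists a continuous strictly monotone $h:I\to\mathbb{R}$ such that $B_{g,f}(x,\lambda)=A_h(x,\lambda)$ for all $x\in I^2$ and $\lambda\in\Lambda_2$. (v) There exist $t\in\,]0,\frac12[\,\cup\,]\frac12,1[\,$ and a continuous strictly monotone $h:I\to\mathbb{R}$ such that $B_{g,f}(x,\lambda)=A_h(x,\lambda)$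 for all $x\in I^2$ with $\lambda=(t,1-t)$. (vi) There exist constants $a,b\in\mathbb{R}$ such that $af+bg=1$ on $I$. (vii) (Applicable when $(f,g)\in\mathscr{B}_2(I)$.) $\Psi_{f,g}=0$ on $I$. Then (i)–(vi) are equivalent, and if in addition $(f,g)\in\mathscr{B}_2(I)$, then (i)–(vii) are all equivalent.
   Context: $\Lambda_n:=\{(\lambda_1,\dots,\lambda_n)\in\mathbb{R}^n:\lambda_1,\dots,\lambda_n\geq0,\ \lambda_1+\dots+\lambda_n>0\}$. $\mathscr{B}_0(I)$ is the class of pairs $(f,g)$ of functions $I\to\mathbb{R}$ such that $f$ is everywhere positive on $I$ and $g/f$ is strictly monotone and continuous on $I$. $\mathscr{B}_2(I)$ is the class of pairs $(f,g)$ such that $f$ is everywhere positive on $I$, $f,g$ are twice continuously differentiable on $I$, and $(g/f)'$ is nowhere zero on $I$. For such pairs, $W^{i,j}_{f,g}:=f^{(i)}g^{(j)}-f^{(j)}g^{(i)}$ and $\Psi_{f,g}:=-W^{2,1}_{f,g}/W^{1,0}_{f,g}$. *)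

theory Defs
  imports "HOL-Analysis.Analysis"
begin

definition cont_strict_mono :: "real set \<Rightarrow> (real \<Rightarrow> real) \<Rightarrow> bool" where
  "cont_strict_mono I h \<longleftrightarrow> continuous_on I h \<and> (strict_mono_on I h \<or> strict_antimono_on I h)"

definition B0 :: "real set \<Rightarrow> (real \<Rightarrow> real) \<Rightarrow> (real \<Rightarrow> real) \<Rightarrow> bool" where
  "B0 I f g \<longleftrightarrow> (\<forall>x\<in>I. f x > 0) \<and> cont_strict_mono I (\<lambda>x. g x / f x)"

definition C2_on :: "real set \<Rightarrow> (real \<Rightarrow> real) \<Rightarrow> bool" where
  "C2_on I f \<longleftrightarrow> (\<forall>x\<in>I. f differentiable (at x)) \<and> (\<forall>x\<in>I. deriv f differentiable (at x))
      \<and> continuous_on I (deriv (deriv f))"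

definition B2 :: "real set \<Rightarrow> (real \<Rightarrow> real) \<Rightarrow> (real \<Rightarrow> real) \<Rightarrow> bool" where
  "B2 I f g \<longleftrightarrow> (\<forall>x\<in>I. f x > 0) \<and> C2_on I f \<and> C2_on I g
      \<and> (\<forall>x\<in>I. deriv (\<lambda>t. g t / f t) x \<noteq> 0)"

definition W :: "nat \<Rightarrow> nat \<Rightarrow> (real \<Rightarrow> real) \<Rightarrow> (real \<Rightarrow> real) \<Rightarrow> real \<Rightarrow> real" where
  "W i j f g x = (deriv ^^ i) f x * (deriv ^^ j) g x - (deriv ^^ j) f x * (deriv ^^ i) g x"

definition Psi :: "(real \<Rightarrow> real) \<Rightarrow> (real \<Rightarrow> real) \<Rightarrow> real \<Rightarrow> real" where
  "Psi f g x = - W 2 1 f g x / W 1 0 f g x"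

text \<open>x \<in> I^n, represented as a function on indices 0..n-1.\<close>
definition in_power :: "real set \<Rightarrow> nat \<Rightarrow> (nat \<Rightarrow> real) \<Rightarrow> bool" where
  "in_power I n x \<longleftrightarrow> (\<forall>i<n. x i \<in> I)"

definition Lambda :: "nat \<Rightarrow> (nat \<Rightarrow> real) \<Rightarrow> bool" where
  "Lambda n l \<longleftrightarrow> (\<forall>i<n. l i \<ge> 0) \<and> (\<Sum>i<n. l i) > 0"

definition Bmean :: "real set \<Rightarrow> (real \<Rightarrow> real) \<Rightarrow> (real \<Rightarrow> real) \<Rightarrow> nat \<Rightarrow> (nat \<Rightarrow> real) \<Rightarrow> (nat \<Rightarrow> real) \<Rightarrow> real" where
  "Bmean I g f n x l = the_inv_into I (\<lambda>t. g t / f t)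
      ((\<Sum>i<n. l i * g (x i)) / (\<Sum>i<n. l i * f (x i)))"

definition Amean :: "real set \<Rightarrow> (real \<Rightarrow> real) \<Rightarrow> nat \<Rightarrow> (nat \<Rightarrow> real) \<Rightarrow> (nat \<Rightarrow> real) \<Rightarrow> real" where
  "Amean I h n x l = the_inv_into I h ((\<Sum>i<n. l i * h (x i)) / (\<Sum>i<n. l i))"

definition stmt_i where
  "stmt_i I f g \<longleftrightarrow> (\<exists>h. cont_strict_mono I h \<and>
     (\<forall>n\<ge>1. \<forall>x l. in_power I n x \<and> Lambda n l \<longrightarrow> Bmean I g f n x l = Amean I h n x l))"

definition stmt_ii where
  "stmt_ii I f g \<longleftrightarrow> (\<exists>h. cont_strict_mono I h \<and>
     (\<forall>n\<ge>1. \<forall>x. in_power I n x \<longrightarrow> Bmean I g f n x (\<lambda>_. 1) = Amean I h n x (\<lambda>_. 1)))"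

definition stmt_iii where
  "stmt_iii I f g \<longleftrightarrow> (\<exists>h n. cont_strict_mono I h \<and> n \<ge> 3 \<and>
     (\<forall>x. in_power I n x \<longrightarrow> Bmean I g f n x (\<lambda>_. 1) = Amean I h n x (\<lambda>_. 1)))"

definition stmt_iv where
  "stmt_iv I f g \<longleftrightarrow> (\<exists>h. cont_strict_mono I h \<and>
     (\<forall>x l. in_power I 2 x \<and> Lambda 2 l \<longrightarrow> Bmean I g f 2 x l = Amean I h 2 x l))"

definition stmt_v where
  "stmt_v I f g \<longleftrightarrow> (\<exists>t h. t \<in> {0<..<1/2} \<union> {1/2<..<1} \<and> cont_strict_mono I h \<and>
     (\<forall>x. in_power I 2 x \<longrightarrow>
        Bmean I g f 2 x (\<lambda>i. if i = 0 then t else 1 - t) = Amean I h 2 x (\<lambda>i. if i = 0 then t else 1 - t)))"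

definition stmt_vi where
  "stmt_vi I f g \<longleftrightarrow> (\<exists>a b::real. \<forall>x\<in>I. a * f x + b * g x = 1)"

definition stmt_vii where
  "stmt_vii I f g \<longleftrightarrow> (\<forall>x\<in>I. Psi f g x = 0)"

end

(*
  (i) => (ii) => (iii) and (i) => (iv) => (v) are specialisations, and (iii) => (v) follows by
  repeating one variable n - 1 times. If a f + b g = 1, the Bajraktarevic mean B_{g,f} is the
  quasi-arithmetic mean generated by a g - b f, which gives (vi) => (i).

  The substance is (v) => (vi). In the coordinate u = h x, with F = f o h^-1 and G = g o h^-1,
  the wedge E a b = F a G b - G a F b satisfies t E w p + (1 - t) E w q = 0 for w = t p + (1 - t) q,
  and E a b <> 0 for a <> b. Choosing p and q on either side of w gives
  E w (w - k z) = - k E w (w + z) with k = t / (1 - t) < 1 (w.l.o.g. t < 1/2). Composing two such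
  reflections shows that a |-> E a (a + d) has arbitrarily small periods, hence
  E a (a + d) = psi d, that psi (k^2 d) = k^2 psi d, and, by the Pluecker relation for E, that psi
  satisfies the sine equation. These force psi d = C d, and E a b = C (b - a) is an affine relation
  between F and G.

  For smooth f, g, (vi) <=> (vii) because Psi = 0 says that (f', g') has constant direction.
*)
theory Submission
  imports Defs
begin

section \<open>The sine functional equation\<close>

lemma scaled_orbit_hits_interval:
  fixes q D x :: real
  assumes q: "0 < q" "q < 1" and x: "0 < x" "x \<le> D"
  obtains n where "q * D < x / q ^ n" "x / q ^ n \<le> D"
proof -
  obtain m where "q ^ m < x / D"
    using real_arch_pow_inv[of "x / D" q] q x by auto
  then have "D < x / q ^ m"
    using q x by (simp add: field_simps)
  then obtain n where "\<not> D < x / q ^ n" "D < x / q ^ Suc n"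
    using exists_least_lemma[of "\<lambda>n. D < x / q ^ n"] x by auto
  then show ?thesis
    using that[of n] q by (simp add: field_simps)
qed

lemma scale_invariant_power:
  fixes u :: "real \<Rightarrow> 'a"
  assumes q: "0 < q" "q \<le> 1"
    and invariant: "\<And>d. 0 < d \<Longrightarrow> d \<le> D \<Longrightarrow> u (q * d) = u d"
    and d: "0 < d" "d \<le> D"
  shows "u (q ^ n * d) = u d"
proof (induction n)
  case (Suc n)
  have "q ^ n * d \<le> d"
    using q d by (simp add: mult_left_le_one_le power_le_one)
  then have "q ^ n * d \<le> D"
    using d by linarith
  then have "u (q * (q ^ n * d)) = u (q ^ n * d)"
    using q d by (intro invariant) auto
  then show ?case
    using Suc.IH by (simp add: mult.assoc)
qed simp

lemma scale_invariant_attains_max: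
  fixes u :: "real \<Rightarrow> real"
  assumes q: "0 < q" "q < 1" and D: "0 < D"
    and cont: "continuous_on {q * D..D} u"
    and invariant: "\<And>d. 0 < d \<Longrightarrow> d \<le> D \<Longrightarrow> u (q * d) = u d"
  obtains y where "y \<in> {q * D..D}" "\<And>x. 0 < x \<Longrightarrow> x \<le> D \<Longrightarrow> u x \<le> u y"
proof -
  obtain y where y: "y \<in> {q * D..D}" and max: "\<And>z. z \<in> {q * D..D} \<Longrightarrow> u z \<le> u y"
    using continuous_attains_sup[OF compact_Icc _ cont] q D by auto
  have "u x \<le> u y" if x: "0 < x" "x \<le> D" for x
  proof -
    obtain n where n: "q * D < x / q ^ n" "x / q ^ n \<le> D"
      using scaled_orbit_hits_interval[OF q x] .
    have "u x = u (q ^ n * (x / q ^ n))"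
      using q by simp
    also have "\<dots> = u (x / q ^ n)"
      using q x n by (intro scale_invariant_power[where D = D] invariant) auto
    finally show ?thesis
      using max n by simp
  qed
  then show ?thesis
    using that y by blast
qed

lemma sine_equation_square_bound_attained:
  fixes \<psi> :: "real \<Rightarrow> real"
  assumes bound: "\<And>x. 0 < x \<Longrightarrow> x \<le> D \<Longrightarrow> \<psi> x ^ 2 \<le> M * x ^ 2"
    and sine: "\<And>x y. 0 < x \<Longrightarrow> x < y \<Longrightarrow> x + y \<le> D \<Longrightarrow>
      \<psi> x ^ 2 - \<psi> y ^ 2 + \<psi> (x + y) * \<psi> (y - x) = 0"
    and y: "0 < y" "2 * y \<le> D" "\<psi> y ^ 2 = M * y ^ 2"
    and x: "0 < x" "x < y"
  shows "\<psi> x ^ 2 = M * x ^ 2"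
proof -
  have M: "0 \<le> M"
    using y zero_le_power2[of "\<psi> y"] by (simp add: zero_le_mult_iff)
  moreover have "x ^ 2 < y ^ 2"
    using x by (simp add: power_strict_mono)
  ultimately have nonneg: "0 \<le> M * (y ^ 2 - x ^ 2)"
    by simp
  have "(\<psi> (x + y) * \<psi> (y - x)) ^ 2 = \<psi> (x + y) ^ 2 * \<psi> (y - x) ^ 2"
    by (simp add: power_mult_distrib)
  also have "\<dots> \<le> (M * (x + y) ^ 2) * (M * (y - x) ^ 2)"
    using x y M by (intro mult_mono bound) auto
  also have "\<dots> = (M * (y ^ 2 - x ^ 2)) ^ 2"
    by (simp add: power2_eq_square algebra_simps)
  finally have "\<psi> (x + y) * \<psi> (y - x) \<le> M * (y ^ 2 - x ^ 2)"
    using nonneg by (rule power2_le_imp_le)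
  then have "M * x ^ 2 \<le> \<psi> x ^ 2"
    using sine[of x y] x y by (simp add: algebra_simps)
  then show ?thesis
    using bound[of x] x y by simp
qed

lemma continuous_square_constant_imp_constant:
  fixes \<sigma> :: "real \<Rightarrow> real"
  assumes "connected S" "continuous_on S \<sigma>" "\<And>x. x \<in> S \<Longrightarrow> \<sigma> x ^ 2 = M"
  shows "\<sigma> constant_on S"
proof (rule continuous_finite_range_constant[OF assms(1,2)])
  have "\<sigma> x \<in> {sqrt M, - sqrt M}" if "x \<in> S" for x
    using real_sqrt_abs[of "\<sigma> x"] assms(3)[OF that] by (cases "0 \<le> \<sigma> x") auto
  then have "\<sigma> ` S \<subseteq> {sqrt M, - sqrt M}"
    by blast
  then show "finite (\<sigma> ` S)"
    by (rule finite_subset) simp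
qed

text \<open>Continuous solutions of the sine functional equation are of the form
  \<open>C * sin (c * d)\<close>, \<open>C * d\<close> or \<open>C * sinh (c * d)\<close>; homogeneity under one
  contraction \<open>d \<mapsto> q * d\<close> singles out the linear ones. The argument avoids this
  classification: \<open>\<psi> d / d\<close> is scale invariant, so its square attains its supremum
  arbitrarily close to \<open>0\<close>, and the sine equation spreads this maximum to a whole
  interval.\<close>
lemma sine_equation_homogeneous_square_linear:
  fixes \<psi> :: "real \<Rightarrow> real"
  assumes D: "0 < D" and q: "0 < q" "q < 1"
    and cont: "continuous_on {0<..D} \<psi>"
    and homogeneous: "\<And>d. 0 < d \<Longrightarrow> d \<le> D \<Longrightarrow> \<psi> (q * d) = q * \<psi> d"
    and sine: "\<And>x y. 0 < x \<Longrightarrow> x < y \<Longrightarrow> x + y \<le> D \<Longrightarrow>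
      \<psi> x ^ 2 - \<psi> y ^ 2 + \<psi> (x + y) * \<psi> (y - x) = 0"
  obtains y M where "0 < y" "y \<le> D" "\<And>x. 0 < x \<Longrightarrow> x \<le> y \<Longrightarrow> \<psi> x ^ 2 = M * x ^ 2"
proof -
  have qD: "0 < q * D"
    using q D by simp
  define \<sigma> where "\<sigma> d = \<psi> d / d" for d
  have invariant: "\<sigma> (q * d) ^ 2 = \<sigma> d ^ 2" if "0 < d" "d \<le> D" for d
    using homogeneous[OF that] q that by (simp add: \<sigma>_def)
  have "continuous_on {q * D..D} (\<lambda>d. \<sigma> d ^ 2)"
    unfolding \<sigma>_def using qD
    by (intro continuous_intros continuous_on_subset[OF cont]) (auto intro: less_le_trans)
  then obtain y0 where y0: "y0 \<in> {q * D..D}"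
    and max: "\<And>x. 0 < x \<Longrightarrow> x \<le> D \<Longrightarrow> \<sigma> x ^ 2 \<le> \<sigma> y0 ^ 2"
    using scale_invariant_attains_max[OF q D, of "\<lambda>d. \<sigma> d ^ 2"] invariant by blast
  define M where "M = \<sigma> y0 ^ 2"
  have bound: "\<psi> x ^ 2 \<le> M * x ^ 2" if "0 < x" "x \<le> D" for x
    using max[OF that] that by (simp add: M_def \<sigma>_def power_divide field_simps)
  have y0_pos: "0 < y0"
    using y0 qD by (auto intro: less_le_trans)
  obtain n where n: "q ^ n < 1 / 2"
    using real_arch_pow_inv[of "1 / 2" q] q by auto
  define y where "y = q ^ n * y0"
  have "2 * y < y0"
    using mult_strict_right_mono[of "2 * q ^ n" 1 y0] n y0_pos by (simp add: y_def mult.assoc)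
  moreover have "0 < y"
    using y0_pos q by (simp add: y_def)
  ultimately have y: "0 < y" "2 * y \<le> D"
    using y0 by auto
  have "\<sigma> y ^ 2 = M"
    unfolding y_def M_def using q y0 y0_pos
    by (intro scale_invariant_power[where D = D and u = "\<lambda>d. \<sigma> d ^ 2"] invariant) auto
  then have \<psi>y: "\<psi> y ^ 2 = M * y ^ 2"
    using y by (simp add: \<sigma>_def power_divide divide_eq_eq)
  have "\<psi> x ^ 2 = M * x ^ 2" if "0 < x" "x \<le> y" for x
    using sine_equation_square_bound_attained[OF bound sine y \<psi>y, of x] \<psi>y that
    by (cases "x = y") auto
  then show ?thesis
    using that y by auto
qed

lemma sine_equation_homogeneous_imp_linear:
  fixes \<psi> :: "real \<Rightarrow> real"
  assumes D: "0 < D" and q: "0 < q" "q < 1"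
    and cont: "continuous_on {0<..D} \<psi>"
    and nonzero: "\<And>d. 0 < d \<Longrightarrow> d \<le> D \<Longrightarrow> \<psi> d \<noteq> 0"
    and homogeneous: "\<And>d. 0 < d \<Longrightarrow> d \<le> D \<Longrightarrow> \<psi> (q * d) = q * \<psi> d"
    and sine: "\<And>x y. 0 < x \<Longrightarrow> x < y \<Longrightarrow> x + y \<le> D \<Longrightarrow>
      \<psi> x ^ 2 - \<psi> y ^ 2 + \<psi> (x + y) * \<psi> (y - x) = 0"
  obtains C \<delta> where "C \<noteq> 0" "0 < \<delta>" "\<And>d. 0 < d \<Longrightarrow> d \<le> \<delta> \<Longrightarrow> \<psi> d = C * d"
proof -
  obtain y M where y: "0 < y" "y \<le> D" and square: "\<And>x. 0 < x \<Longrightarrow> x \<le> y \<Longrightarrow> \<psi> x ^ 2 = M * x ^ 2"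
    using sine_equation_homogeneous_square_linear[OF D q cont homogeneous sine] by blast
  have "continuous_on {0<..y} (\<lambda>d. \<psi> d / d)"
    using y by (intro continuous_intros continuous_on_subset[OF cont]) auto
  moreover have "(\<psi> x / x) ^ 2 = M" if "x \<in> {0<..y}" for x
    using square[of x] that by (simp add: power_divide)
  ultimately have "(\<lambda>d. \<psi> d / d) constant_on {0<..y}"
    by (intro continuous_square_constant_imp_constant) auto
  then obtain C where C: "\<And>x. x \<in> {0<..y} \<Longrightarrow> \<psi> x / x = C"
    unfolding constant_on_def by blast
  have "C \<noteq> 0"
    using C[of y] nonzero[of y] y by auto
  then show ?thesis
    using that[of C y] C y by (auto simp: field_simps)
qed

section \<open>The wedge functional equation\<close>

definition wedge :: "(real \<Rightarrow> real) \<Rightarrow> (real \<Rightarrow> real) \<Rightarrow> real \<Rightarrow> real \<Rightarrow> real" where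
  "wedge F G a b = F a * G b - G a * F b"

lemma wedge_swap: "wedge F G b a = - wedge F G a b"
  by (simp add: wedge_def)

lemma wedge_self [simp]: "wedge F G a a = 0"
  by (simp add: wedge_def)

lemma wedge_plucker:
  "wedge F G a b * wedge F G c d - wedge F G a c * wedge F G b d + wedge F G a d * wedge F G b c = 0"
  by (simp add: wedge_def algebra_simps)

lemma translation_invariant_wedge_sine_equation:
  assumes translate: "\<And>a d. 0 < d \<Longrightarrow> d \<le> D \<Longrightarrow> \<alpha> \<le> a \<Longrightarrow> a + d \<le> \<alpha> + D \<Longrightarrow>
      wedge F G a (a + d) = \<psi> d"
    and xy: "0 < x" "x < y" "x + y \<le> D"
  shows "\<psi> x ^ 2 - \<psi> y ^ 2 + \<psi> (x + y) * \<psi> (y - x) = 0"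
proof -
  have "wedge F G \<alpha> (\<alpha> + x) = \<psi> x" "wedge F G \<alpha> (\<alpha> + y) = \<psi> y"
    "wedge F G \<alpha> (\<alpha> + x + y) = \<psi> (x + y)"
    using translate xy by (simp_all add: add.assoc)
  moreover have "wedge F G (\<alpha> + y) (\<alpha> + x + y) = \<psi> x"
    using translate[of x "\<alpha> + y"] xy by (simp add: add_ac)
  moreover have "wedge F G (\<alpha> + x) (\<alpha> + x + y) = \<psi> y"
    using translate[of y "\<alpha> + x"] xy by (simp add: add_ac)
  moreover have "wedge F G (\<alpha> + x) (\<alpha> + y) = \<psi> (y - x)"
    using translate[of "y - x" "\<alpha> + x"] xy by simp
  ultimately show ?thesis
    using wedge_plucker[of F G \<alpha> "\<alpha> + x" "\<alpha> + y" "\<alpha> + x + y"]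
    by (simp add: power2_eq_square)
qed

lemma wedge_linear_three_halves:
  assumes C: "C \<noteq> 0"
    and short: "\<And>a b. \<alpha> \<le> a \<Longrightarrow> a < b \<Longrightarrow> b \<le> \<beta> \<Longrightarrow> b - a \<le> L \<Longrightarrow>
      wedge F G a b = C * (b - a)"
    and ab: "\<alpha> \<le> a" "a < b" "b \<le> \<beta>" "b - a \<le> 3 / 2 * L"
  shows "wedge F G a b = C * (b - a)"
proof -
  define s where "s = (b - a) / 3"
  have s: "0 < s" "2 * s \<le> L" "b = a + 3 * s"
    using ab by (auto simp: s_def field_simps)
  have "wedge F G a (a + s) = C * s" "wedge F G (a + 2 * s) b = C * s"
    "wedge F G a (a + 2 * s) = C * (2 * s)" "wedge F G (a + s) b = C * (2 * s)"
    "wedge F G (a + s) (a + 2 * s) = C * s"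
    using s ab by (subst short; force)+
  moreover have "wedge F G a (a + s) * wedge F G (a + 2 * s) b - wedge F G a (a + 2 * s) * wedge F G (a + s) b
      + wedge F G a b * wedge F G (a + s) (a + 2 * s) = 0"
    by (rule wedge_plucker)
  ultimately have "wedge F G a b * (C * s) = (C * (3 * s)) * (C * s)"
    by (simp add: algebra_simps power2_eq_square)
  then show ?thesis
    using C s by simp
qed

lemma wedge_linear_extend:
  assumes C: "C \<noteq> 0" and \<delta>: "0 < \<delta>"
    and short: "\<And>a b. \<alpha> \<le> a \<Longrightarrow> a < b \<Longrightarrow> b \<le> \<beta> \<Longrightarrow> b - a \<le> \<delta> \<Longrightarrow>
      wedge F G a b = C * (b - a)"
    and ab: "\<alpha> \<le> a" "a \<le> b" "b \<le> \<beta>"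
  shows "wedge F G a b = C * (b - a)"
proof -
  have gaps: "wedge F G a b = C * (b - a)"
    if "\<alpha> \<le> a" "a < b" "b \<le> \<beta>" "b - a \<le> (3 / 2) ^ n * \<delta>" for n a b
    using that
  proof (induction n arbitrary: a b)
    case 0
    then show ?case
      using short by simp
  next
    case (Suc n)
    then show ?case
      by (intro wedge_linear_three_halves[OF C Suc.IH]) auto
  qed
  obtain n where "(\<beta> - \<alpha>) / \<delta> < (3 / 2) ^ n"
    using real_arch_pow[of "3 / 2 :: real"] by auto
  then have "b - a \<le> (3 / 2) ^ n * \<delta>"
    using \<delta> ab by (simp add: divide_less_eq)
  then show ?thesis
    using gaps ab by (cases "a = b") auto
qed

lemma constant_if_arbitrarily_small_periods:
  fixes u :: "real \<Rightarrow> 'a::metric_space"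
  assumes cont: "continuous_on {a..b} u"
    and periods: "\<And>e. 0 < e \<Longrightarrow>
      \<exists>p. 0 < p \<and> p < e \<and> (\<forall>x. a \<le> x \<longrightarrow> x + p \<le> b \<longrightarrow> u (x + p) = u x)"
    and x: "x \<in> {a..b}"
  shows "u x = u a"
proof (rule ccontr)
  assume "u x \<noteq> u a"
  then obtain d where d: "0 < d"
    and near: "\<And>y. y \<in> {a..b} \<Longrightarrow> dist y x < d \<Longrightarrow> dist (u y) (u x) < dist (u x) (u a)"
    using cont x unfolding continuous_on_iff by (metis zero_less_dist_iff)
  obtain p where p: "0 < p" "p < d" and per: "\<And>y. a \<le> y \<Longrightarrow> y + p \<le> b \<Longrightarrow> u (y + p) = u y"
    using periods[OF d] by blast
  define N where "N = nat \<lfloor>(x - a) / p\<rfloor>"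
  have "real N = of_int \<lfloor>(x - a) / p\<rfloor>"
    using x p by (simp add: N_def)
  then have N: "real N * p \<le> x - a" "x - a < real N * p + p"
    using p floor_divide_lower[of p "x - a"] floor_divide_upper[of p "x - a"]
    by (auto simp: distrib_right)
  have multiples: "u (a + real n * p) = u a" if "n \<le> N" for n
    using that
  proof (induction n)
    case (Suc n)
    have "real (Suc n) * p \<le> real N * p"
      using Suc.prems p by (intro mult_right_mono) auto
    then have "u (a + real n * p + p) = u (a + real n * p)"
      using N x p by (intro per) (auto simp: algebra_simps)
    then show ?case
      using Suc by (simp add: algebra_simps)
  qed simp
  have "dist (u (a + real N * p)) (u x) < dist (u x) (u a)"
    using N p x by (intro near) (auto simp: dist_real_def)
  then show False
    using multiples[of N] by (simp add: dist_commute)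
qed

lemma open_interval_contains_margin:
  fixes H :: "real set"
  assumes "is_interval H" "open H" "a \<in> H" "b \<in> H"
  obtains \<mu> where "0 < \<mu>" "{a - \<mu>..b + \<mu>} \<subseteq> H"
proof -
  obtain e1 e2 where e: "0 < e1" "ball a e1 \<subseteq> H" "0 < e2" "ball b e2 \<subseteq> H"
    by (meson assms(2-4) openE)
  define \<mu> where "\<mu> = min e1 e2 / 2"
  have \<mu>: "0 < \<mu>" "\<mu> < e1" "\<mu> < e2"
    using e by (simp_all add: \<mu>_def min_def)
  then have "a - \<mu> \<in> ball a e1" "b + \<mu> \<in> ball b e2"
    by (simp_all add: dist_real_def)
  then have "a - \<mu> \<in> H" "b + \<mu> \<in> H"
    using e by blast+
  then have "{a - \<mu>..b + \<mu>} \<subseteq> H"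
    using mem_is_interval_1_I[OF assms(1)] by (meson atLeastAtMost_iff subsetI)
  then show ?thesis
    using that \<mu> by blast
qed

locale wedge_balance =
  fixes F G :: "real \<Rightarrow> real" and H :: "real set" and t :: real
  assumes interval: "is_interval H" and open_H: "open H"
    and t: "0 < t" "t < 1 / 2"
    and continuous_F: "continuous_on H F" and continuous_G: "continuous_on H G"
    and wedge_nonzero: "\<And>a b. a \<in> H \<Longrightarrow> b \<in> H \<Longrightarrow> a \<noteq> b \<Longrightarrow> wedge F G a b \<noteq> 0"
    and balance: "\<And>p q. p \<in> H \<Longrightarrow> q \<in> H \<Longrightarrow>
      t * wedge F G (t * p + (1 - t) * q) p + (1 - t) * wedge F G (t * p + (1 - t) * q) q = 0"
begin

definition k :: real where "k = t / (1 - t)"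

lemma k_pos: "0 < k" and k_less_1: "k < 1"
  using t by (auto simp: k_def field_simps)

lemma wedge_reflect:
  assumes "w + z \<in> H" "w - k * z \<in> H"
  shows "wedge F G w (w - k * z) = - k * wedge F G w (w + z)"
proof -
  have "t * (w + z) + (1 - t) * (w - k * z) = w"
    using t by (simp add: k_def field_simps)
  then have "t * wedge F G w (w + z) + (1 - t) * wedge F G w (w - k * z) = 0"
    using balance[OF assms] by simp
  then show ?thesis
    using t by (simp add: k_def field_simps)
qed

lemma wedge_scale:
  assumes "a - k * d \<in> H" "a + d \<in> H" "0 \<le> d"
  shows "wedge F G a (a + k\<^sup>2 * d) = k\<^sup>2 * wedge F G a (a + d)"
proof -
  have kd: "0 \<le> k * d" "0 \<le> k\<^sup>2 * d" "k\<^sup>2 * d \<le> d"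
    using assms(3) k_pos k_less_1 by (simp_all add: mult_left_le_one_le power_le_one)
  have mem: "a \<in> H" "a + k\<^sup>2 * d \<in> H"
    by (rule mem_is_interval_1_I[OF interval assms(1,2)]; use kd assms(3) in linarith)+
  have rw: "a - k * (- k * d) = a + k\<^sup>2 * d" "a + - k * d = a - k * d"
    by (simp_all add: power2_eq_square)
  have "wedge F G a (a + k\<^sup>2 * d) = - k * wedge F G a (a - k * d)"
    using wedge_reflect[of a "- k * d", unfolded rw] assms(1) mem(2) by blast
  also have "wedge F G a (a - k * d) = - k * wedge F G a (a + d)"
    using assms by (intro wedge_reflect) auto
  finally show ?thesis
    by (simp add: power2_eq_square)
qed

lemma wedge_scale_power:
  assumes "a - k * d \<in> H" "a + d \<in> H" "0 \<le> d"
  shows "wedge F G a (a + (k\<^sup>2) ^ n * d) = (k\<^sup>2) ^ n * wedge F G a (a + d)"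
proof (induction n)
  case (Suc n)
  define e where "e = (k\<^sup>2) ^ n * d"
  have "0 \<le> e" "e \<le> d" "0 \<le> k * e" "k * e \<le> k * d" "0 \<le> k * d"
    using assms(3) k_pos k_less_1
    by (auto simp: e_def mult_left_le_one_le power_le_one mult_left_mono)
  then have "a - k * e \<in> H" "a + e \<in> H"
    using assms by (auto intro!: mem_is_interval_1_I[OF interval assms(1,2)])
  then have "wedge F G a (a + k\<^sup>2 * e) = k\<^sup>2 * wedge F G a (a + e)"
    using \<open>0 \<le> e\<close> by (intro wedge_scale)
  then show ?case
    using Suc.IH by (simp add: e_def mult.assoc)
qed simp

lemma wedge_scale_margin:
  assumes "{a - \<mu>..a + \<mu>} \<subseteq> H" "0 \<le> d" "d \<le> \<mu>"
  shows "wedge F G a (a + k\<^sup>2 * d) = k\<^sup>2 * wedge F G a (a + d)"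
proof -
  have "0 \<le> k * d" "k * d \<le> d"
    using assms(2) k_pos k_less_1 by (simp_all add: mult_left_le_one_le)
  then have "a - k * d \<in> H" "a + d \<in> H"
    using assms by (auto simp: subset_eq)
  then show ?thesis
    using assms(2) by (rule wedge_scale)
qed

lemma wedge_shift:
  assumes "a - (1 + k) * d \<in> H" "a + d \<in> H" "0 \<le> d"
  shows "wedge F G (a - (1 + k) * d) (a - k * d) = wedge F G a (a + d)"
proof -
  have mem: "a \<in> H" "a - k * d \<in> H"
    using assms k_pos by (auto intro!: mem_is_interval_1_I[OF interval assms(1,2)] simp: algebra_simps)
  have "wedge F G a (a - k * d) = - k * wedge F G a (a + d)"
    using assms mem by (intro wedge_reflect) auto
  then have "k * wedge F G a (a + d) = wedge F G (a - k * d) a"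
    using wedge_swap[of F G "a - k * d" a] by simp
  also have "\<dots> = - k * wedge F G (a - k * d) (a - (1 + k) * d)"
    using wedge_reflect[of "a - k * d" "- d"] assms mem by (simp add: algebra_simps)
  also have "\<dots> = k * wedge F G (a - (1 + k) * d) (a - k * d)"
    using wedge_swap[of F G "a - k * d" "a - (1 + k) * d"] by simp
  finally show ?thesis
    using k_pos by simp
qed

lemma wedge_period:
  assumes "x - k * d \<in> H" "x + p + d \<in> H" "0 \<le> d"
    and p: "p = (1 + k) * ((k\<^sup>2) ^ n * d)"
  shows "wedge F G (x + p) (x + p + d) = wedge F G x (x + d)"
proof -
  define e where "e = (k\<^sup>2) ^ n * d"
  have e: "0 \<le> e" "e \<le> d" "p = (1 + k) * e"
    using assms k_pos k_less_1 by (auto simp: e_def mult_left_le_one_le power_le_one)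
  have pd: "0 \<le> p" "0 \<le> k * d"
    using e assms(3) k_pos by auto
  have mem: "x \<in> H" "x + p - k * d \<in> H" "x + d \<in> H" "x + p + e \<in> H"
    by (rule mem_is_interval_1_I[OF interval assms(1,2)]; use e pd assms(3) in linarith)+
  have shifted: "x + p - (1 + k) * e = x" "x + p - k * e = x + e"
    using e(3) by (simp_all add: algebra_simps)
  have "wedge F G x (x + e) = wedge F G (x + p) (x + p + e)"
    using wedge_shift[of "x + p" e] mem e(1) unfolding shifted by simp
  moreover have "wedge F G x (x + e) = (k\<^sup>2) ^ n * wedge F G x (x + d)"
    unfolding e_def by (rule wedge_scale_power) (use assms mem in auto)
  moreover have "wedge F G (x + p) (x + p + e) = (k\<^sup>2) ^ n * wedge F G (x + p) (x + p + d)"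
    unfolding e_def by (rule wedge_scale_power) (use assms mem in auto)
  ultimately have "(k\<^sup>2) ^ n * wedge F G x (x + d) = (k\<^sup>2) ^ n * wedge F G (x + p) (x + p + d)"
    by simp
  then show ?thesis
    using k_pos by simp
qed

lemma wedge_translation_invariant:
  assumes sub: "{\<alpha> - \<mu>..\<beta> + \<mu>} \<subseteq> H" and d: "0 < d" "d \<le> \<mu>" and a: "\<alpha> \<le> a" "a + d \<le> \<beta>"
  shows "wedge F G a (a + d) = wedge F G \<alpha> (\<alpha> + d)"
proof -
  define u where "u x = wedge F G x (x + d)" for x
  have kd: "0 \<le> k * d" "k * d \<le> \<mu>"
    using d k_pos k_less_1 by (auto intro: order_trans[OF mult_left_le_one_le])
  have "{\<alpha>..\<beta> - d} \<subseteq> H" "(\<lambda>x. x + d) ` {\<alpha>..\<beta> - d} \<subseteq> H"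
    using d subset_trans[OF _ sub] by auto
  then have "continuous_on {\<alpha>..\<beta> - d} u"
    unfolding u_def wedge_def
    by (intro continuous_intros continuous_on_subset[OF continuous_F]
        continuous_on_subset[OF continuous_G] continuous_on_compose2[OF continuous_F]
        continuous_on_compose2[OF continuous_G]) auto
  moreover have "\<exists>p. 0 < p \<and> p < e \<and> (\<forall>x. \<alpha> \<le> x \<longrightarrow> x + p \<le> \<beta> - d \<longrightarrow> u (x + p) = u x)"
    if e: "0 < e" for e
  proof -
    have "k\<^sup>2 < 1"
      using k_pos k_less_1 by (simp add: power_less_one_iff)
    then obtain n where n: "(k\<^sup>2) ^ n < e / ((1 + k) * d)"
      using real_arch_pow_inv[of "e / ((1 + k) * d)" "k\<^sup>2"] e d k_pos by auto
    define p where "p = (1 + k) * ((k\<^sup>2) ^ n * d)"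
    have "0 < (1 + k) * d"
      using d k_pos by simp
    then have "(k\<^sup>2) ^ n * ((1 + k) * d) < e"
      using n by (simp add: pos_less_divide_eq)
    then have "0 < p" "p < e"
      using d k_pos by (simp_all add: p_def mult_ac)
    moreover have "u (x + p) = u x" if x: "\<alpha> \<le> x" "x + p \<le> \<beta> - d" for x
    proof -
      have "x - k * d \<in> H" "x + p + d \<in> H"
        using x kd d sub \<open>0 < p\<close> by (auto simp: subset_eq)
      then show ?thesis
        unfolding u_def using d by (intro wedge_period[of x d p n]) (auto simp: p_def)
    qed
    ultimately show ?thesis
      by blast
  qed
  ultimately show ?thesis
    using constant_if_arbitrarily_small_periods[of \<alpha> "\<beta> - d" u a] a by (simp add: u_def)
qed

lemma wedge_locally_linear:
  assumes sub: "{\<alpha> - \<mu>..\<beta> + \<mu>} \<subseteq> H" and "\<alpha> < \<beta>" "0 < \<mu>"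
  obtains C \<delta> where "C \<noteq> 0" "0 < \<delta>"
    "\<And>a b. \<alpha> \<le> a \<Longrightarrow> a < b \<Longrightarrow> b \<le> \<beta> \<Longrightarrow> b - a \<le> \<delta> \<Longrightarrow>
      wedge F G a b = C * (b - a)"
proof -
  define D where "D = min \<mu> (\<beta> - \<alpha>)"
  have D: "0 < D" "D \<le> \<mu>" "D \<le> \<beta> - \<alpha>"
    using assms by (auto simp: D_def)
  define \<psi> where "\<psi> d = wedge F G \<alpha> (\<alpha> + d)" for d
  have mem: "x \<in> H" if "\<alpha> - \<mu> \<le> x" "x \<le> \<beta> + \<mu>" for x
    using sub that by auto
  have translate: "wedge F G a (a + d) = \<psi> d" if "0 < d" "d \<le> D" "\<alpha> \<le> a" "a + d \<le> \<beta>" for a d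
    unfolding \<psi>_def using D that by (intro wedge_translation_invariant[OF sub]) auto
  then have translate': "wedge F G a (a + d) = \<psi> d" if "0 < d" "d \<le> D" "\<alpha> \<le> a" "a + d \<le> \<alpha> + D" for a d
    using that D by simp
  have "(\<lambda>d. \<alpha> + d) ` {0<..D} \<subseteq> H" "\<alpha> \<in> H"
    using D assms by (auto intro!: mem)
  then have "continuous_on {0<..D} \<psi>"
    unfolding \<psi>_def wedge_def
    by (intro continuous_intros continuous_on_compose2[OF continuous_F]
        continuous_on_compose2[OF continuous_G]) auto
  moreover have "\<psi> d \<noteq> 0" if "0 < d" "d \<le> D" for d
    unfolding \<psi>_def using that D assms by (intro wedge_nonzero mem) auto
  moreover have "{\<alpha> - \<mu>..\<alpha> + \<mu>} \<subseteq> H"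
    using assms(2) by (intro order_trans[OF _ sub]) auto
  then have "\<psi> (k\<^sup>2 * d) = k\<^sup>2 * \<psi> d" if "0 < d" "d \<le> D" for d
    unfolding \<psi>_def using that D by (intro wedge_scale_margin) auto
  moreover have "\<psi> x ^ 2 - \<psi> y ^ 2 + \<psi> (x + y) * \<psi> (y - x) = 0"
    if "0 < x" "x < y" "x + y \<le> D" for x y
    using translate' that by (rule translation_invariant_wedge_sine_equation)
  moreover have "0 < k\<^sup>2" "k\<^sup>2 < 1"
    using k_pos k_less_1 by (simp_all add: power_less_one_iff)
  ultimately obtain C \<delta> where C: "C \<noteq> 0" "0 < \<delta>"
    and linear: "\<And>d. 0 < d \<Longrightarrow> d \<le> \<delta> \<Longrightarrow> \<psi> d = C * d"
    using sine_equation_homogeneous_imp_linear[OF D(1), of "k\<^sup>2" \<psi>] by blast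
  show ?thesis
  proof (rule that[OF C(1), of "min \<delta> D"])
    show "0 < min \<delta> D"
      using C D by simp
    fix a b
    assume "\<alpha> \<le> a" "a < b" "b \<le> \<beta>" "b - a \<le> min \<delta> D"
    then show "wedge F G a b = C * (b - a)"
      using translate[of "b - a" a] linear[of "b - a"] by simp
  qed
qed

lemma wedge_linear_on_interval:
  assumes "lo \<in> H" "hi \<in> H" "lo < hi"
  obtains C where "\<And>a b. a \<in> {lo..hi} \<Longrightarrow> b \<in> {lo..hi} \<Longrightarrow> wedge F G a b = C * (b - a)"
proof -
  obtain \<mu> where \<mu>: "0 < \<mu>" "{lo - \<mu>..hi + \<mu>} \<subseteq> H"
    using open_interval_contains_margin[OF interval open_H assms(1,2)] .
  obtain C \<delta> where C: "C \<noteq> 0" "0 < \<delta>"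
    and short: "\<And>a b. lo \<le> a \<Longrightarrow> a < b \<Longrightarrow> b \<le> hi \<Longrightarrow> b - a \<le> \<delta> \<Longrightarrow>
      wedge F G a b = C * (b - a)"
    using wedge_locally_linear[OF \<mu>(2) assms(3) \<mu>(1)] by blast
  have ordered: "wedge F G a b = C * (b - a)" if "lo \<le> a" "a \<le> b" "b \<le> hi" for a b
    using wedge_linear_extend[OF C short that] .
  have "wedge F G a b = C * (b - a)" if "a \<in> {lo..hi}" "b \<in> {lo..hi}" for a b
  proof (cases "a \<le> b")
    case True
    then show ?thesis
      using ordered that by simp
  next
    case False
    then show ?thesis
      using ordered[of b a] that wedge_swap[of F G a b] by (simp add: algebra_simps)
  qed
  then show ?thesis
    using that by blast
qed

lemma affine_relation:
  assumes "H \<noteq> {}"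
  obtains A B where "\<And>u. u \<in> H \<Longrightarrow> A * F u + B * G u = 1"
proof -
  obtain u0 where u0: "u0 \<in> H"
    using assms by blast
  obtain \<mu> where \<mu>: "0 < \<mu>" "{u0 - \<mu>..u0 + \<mu>} \<subseteq> H"
    using open_interval_contains_margin[OF interval open_H u0 u0] .
  define u1 where "u1 = u0 + \<mu>"
  have u1: "u1 \<in> H" "u0 < u1"
    using \<mu> by (auto simp: u1_def)
  define E where "E = wedge F G u0 u1"
  have E: "E \<noteq> 0"
    unfolding E_def using u0 u1 by (intro wedge_nonzero) auto
  have "(G u1 - G u0) / E * F u + (F u0 - F u1) / E * G u = 1" if u: "u \<in> H" for u
  proof -
    have "min u u0 \<in> H" "max u u1 \<in> H" "min u u0 < max u u1"
      using u u0 u1 by (auto simp: min_def max_def)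
    then obtain C where
      linear: "\<And>a b. a \<in> {min u u0..max u u1} \<Longrightarrow> b \<in> {min u u0..max u u1} \<Longrightarrow> wedge F G a b = C * (b - a)"
      using wedge_linear_on_interval by blast
    have mem: "u0 \<in> {min u u0..max u u1}" "u \<in> {min u u0..max u u1}" "u1 \<in> {min u u0..max u u1}"
      using u1 by auto
    have "wedge F G u0 u + wedge F G u u1 = E"
      using linear[OF mem(1,2)] linear[OF mem(2,3)] linear[OF mem(1,3)] by (simp add: E_def algebra_simps)
    then have "(G u1 - G u0) * F u + (F u0 - F u1) * G u = E"
      by (simp add: wedge_def algebra_simps)
    then show ?thesis
      using E by (simp add: add_divide_distrib[symmetric])
  qed
  then show ?thesis
    using that by blast
qed

end

lemma is_interval_convex_comb:
  fixes S :: "real set"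
  assumes "is_interval S" "a \<in> S" "b \<in> S" "0 \<le> u" "u \<le> 1"
  shows "u * a + (1 - u) * b \<in> S"
  using convexD[of S a b u "1 - u"] assms by (simp add: is_interval_convex_1)

lemma balance_imp_continuous:
  fixes F r :: "real \<Rightarrow> real"
  assumes interval: "is_interval H" and "open H" and t: "0 < t" "t < 1"
    and r: "continuous_on H r" "inj_on r H"
    and balance: "\<And>p q. p \<in> H \<Longrightarrow> q \<in> H \<Longrightarrow>
      t * F p * (r p - r (t * p + (1 - t) * q)) + (1 - t) * F q * (r q - r (t * p + (1 - t) * q)) = 0"
  shows "continuous_on H F"
proof (rule continuous_at_imp_continuous_on, rule ballI)
  fix q0
  assume q0: "q0 \<in> H"
  obtain \<mu> where \<mu>: "0 < \<mu>" "{q0 - \<mu>..q0 + \<mu>} \<subseteq> H"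
    using open_interval_contains_margin[OF interval \<open>open H\<close> q0 q0] .
  define p where "p = q0 + \<mu>"
  have p: "p \<in> H" "p \<noteq> q0"
    using \<mu> by (auto simp: p_def)
  define w where "w q = t * p + (1 - t) * q" for q
  have w: "w q \<in> H" if "q \<in> H" for q
    unfolding w_def using t by (intro is_interval_convex_comb[OF interval p(1) that]) auto
  have r_ne: "(1 - t) * (r q - r (w q)) \<noteq> 0" if "q \<in> H - {p}" for q
  proof -
    have "w q \<noteq> q"
      using that t by (auto simp: w_def algebra_simps)
    then show ?thesis
      using r(2) w that t by (auto simp: inj_on_def)
  qed
  \<comment> \<open>Away from \<open>p\<close>, the balance equation solves for \<open>F q\<close> in terms of \<open>r\<close> alone.\<close>
  have F_eq: "F q = - (t * F p * (r p - r (w q))) / ((1 - t) * (r q - r (w q)))"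
    if "q \<in> H - {p}" for q
    using balance[of p q] that p r_ne[OF that] by (simp add: w_def field_simps)
  have "continuous_on (H - {p}) (\<lambda>q. r (w q))"
    using w unfolding w_def
    by (intro continuous_on_compose2[OF r(1)] continuous_intros) auto
  then have "continuous_on (H - {p}) (\<lambda>q. - (t * F p * (r p - r (w q))) / ((1 - t) * (r q - r (w q))))"
    using r_ne by (intro continuous_intros continuous_on_subset[OF r(1)]) auto
  then have "continuous_on (H - {p}) F"
    by (rule continuous_on_eq) (simp add: F_eq)
  then show "isCont F q0"
    using q0 p \<open>open H\<close> by (simp add: continuous_on_eq_continuous_at open_Diff)
qed

lemma wedge_ratio: "wedge F (\<lambda>u. r u * F u) a b = F a * F b * (r b - r a)"
  by (simp add: wedge_def algebra_simps)

lemma balance_imp_affine_relation: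
  fixes F r :: "real \<Rightarrow> real"
  assumes interval: "is_interval H" and "open H" "H \<noteq> {}"
    and t: "0 < t" "t < 1" "t \<noteq> 1 / 2"
    and F: "\<And>u. u \<in> H \<Longrightarrow> F u \<noteq> 0"
    and r: "continuous_on H r" "inj_on r H"
    and balance: "\<And>p q. p \<in> H \<Longrightarrow> q \<in> H \<Longrightarrow>
      t * F p * (r p - r (t * p + (1 - t) * q)) + (1 - t) * F q * (r q - r (t * p + (1 - t) * q)) = 0"
  obtains A B where "\<And>u. u \<in> H \<Longrightarrow> A * F u + B * (r u * F u) = 1"
proof -
  define G where "G u = r u * F u" for u
  \<comment> \<open>The balance equation is symmetric under \<open>(t, p, q) \<mapsto> (1 - t, q, p)\<close>.\<close>
  define s where "s = min t (1 - t)"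
  have s: "0 < s" "s < 1 / 2"
    using t by (auto simp: s_def min_def)
  have s_balance:
    "s * F p * (r p - r (s * p + (1 - s) * q)) + (1 - s) * F q * (r q - r (s * p + (1 - s) * q)) = 0"
    if "p \<in> H" "q \<in> H" for p q
  proof (cases "s = t")
    case False
    then have "s = 1 - t"
      by (auto simp: s_def min_def)
    moreover have "(1 - t) * p + (1 - (1 - t)) * q = t * q + (1 - t) * p"
      by simp
    ultimately show ?thesis
      using balance[OF that(2,1)] by (simp only:) (simp add: algebra_simps)
  qed (use balance that in simp)
  have "s * wedge F G w p + (1 - s) * wedge F G w q
      = F w * (s * F p * (r p - r w) + (1 - s) * F q * (r q - r w))" for w p q
    unfolding G_def wedge_ratio by (simp add: algebra_simps)
  then have "s * wedge F G (s * p + (1 - s) * q) p + (1 - s) * wedge F G (s * p + (1 - s) * q) q = 0"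
    if "p \<in> H" "q \<in> H" for p q
    using s_balance[OF that] by simp
  moreover have "continuous_on H F"
    by (rule balance_imp_continuous[OF interval \<open>open H\<close> t(1,2) r balance])
  moreover have "wedge F G a b \<noteq> 0" if "a \<in> H" "b \<in> H" "a \<noteq> b" for a b
    using F r(2) that unfolding G_def wedge_ratio inj_on_def by auto
  ultimately interpret wedge_balance F G H s
    using interval \<open>open H\<close> s r(1) unfolding G_def by unfold_locales (auto intro: continuous_intros)
  obtain A B where "\<And>u. u \<in> H \<Longrightarrow> A * F u + B * G u = 1"
    using affine_relation[OF \<open>H \<noteq> {}\<close>] by blast
  then show ?thesis
    using that[of A B] by (simp add: G_def)
qed

section \<open>Bajraktarevic means and quasi-arithmetic means\<close>

lemma cont_strict_mono_inj_on: "cont_strict_mono I h \<Longrightarrow> inj_on h I"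
  unfolding cont_strict_mono_def
  using strict_mono_on_imp_inj_on strict_antimono_iff_antimono by blast

lemma cont_strict_mono_image_interval: "is_interval I \<Longrightarrow> cont_strict_mono I h \<Longrightarrow> is_interval (h ` I)"
  unfolding cont_strict_mono_def
  using is_interval_connected_1 connected_continuous_image by blast

lemma cont_strict_mono_image_open:
  assumes "is_interval I" "cont_strict_mono I h" "open U" "U \<subseteq> I"
  shows "open (h ` U)"
  using injective_eq_1d_open_map_UNIV[of I h] assms cont_strict_mono_inj_on
  unfolding cont_strict_mono_def by blast

lemma cont_strict_mono_inverse_continuous:
  assumes "is_interval I" "open I" "cont_strict_mono I h"
  shows "continuous_on (h ` I) (the_inv_into I h)"
proof (rule continuous_on_inverse_open_map)
  show "continuous_on I h"
    using assms(3) by (simp add: cont_strict_mono_def)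
  show "the_inv_into I h (h x) = x" if "x \<in> I" for x
    using the_inv_into_f_f[OF cont_strict_mono_inj_on[OF assms(3)] that] .
  show "openin (top_of_set (h ` I)) (h ` U)" if "openin (top_of_set I) U" for U
  proof -
    have "open U" "U \<subseteq> I"
      using that assms(2) by (auto simp: openin_open_eq)
    then show ?thesis
      using cont_strict_mono_image_open[OF assms(1,3)] assms(2) by (auto intro!: open_openin_trans)
  qed
qed simp

lemma cont_strict_mono_comp_inverse:
  assumes I: "is_interval I" "open I" and h: "cont_strict_mono I h" and \<phi>: "cont_strict_mono I \<phi>"
  shows "continuous_on (h ` I) (\<lambda>u. \<phi> (the_inv_into I h u))"
    and "inj_on (\<lambda>u. \<phi> (the_inv_into I h u)) (h ` I)"
proof -
  have "the_inv_into I h ` h ` I \<subseteq> I"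
    using the_inv_into_into cont_strict_mono_inj_on[OF h] by fastforce
  moreover have "continuous_on I \<phi>"
    using \<phi> by (simp add: cont_strict_mono_def)
  ultimately show "continuous_on (h ` I) (\<lambda>u. \<phi> (the_inv_into I h u))"
    by (intro continuous_on_compose2[OF _ cont_strict_mono_inverse_continuous[OF I h]])
  show "inj_on (\<lambda>u. \<phi> (the_inv_into I h u)) (h ` I)"
  proof (rule inj_onI)
    fix u v
    assume uv: "u \<in> h ` I" "v \<in> h ` I" "\<phi> (the_inv_into I h u) = \<phi> (the_inv_into I h v)"
    then have "the_inv_into I h u = the_inv_into I h v"
      using inj_onD[OF cont_strict_mono_inj_on[OF \<phi>]]
        the_inv_into_into[OF cont_strict_mono_inj_on[OF h] _ subset_refl] by blast
    then show "u = v"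
      using f_the_inv_into_f[OF cont_strict_mono_inj_on[OF h]] uv(1,2) by metis
  qed
qed

lemma Lambda_weighted_sum_pos:
  assumes "Lambda n l" "in_power I n x" "\<And>y. y \<in> I \<Longrightarrow> 0 < f y"
  shows "0 < (\<Sum>i<n. l i * f (x i))"
proof -
  obtain j where j: "j < n" "0 < l j"
    using assms(1) sum_nonpos[of "{..<n}" l] unfolding Lambda_def by force
  then have "0 < l j * f (x j)"
    using assms(2,3) by (simp add: in_power_def)
  moreover have "0 \<le> l i * f (x i)" if "i \<in> {..<n}" for i
  proof -
    have "0 \<le> l i" "0 < f (x i)"
      using assms that unfolding Lambda_def in_power_def by auto
    then show ?thesis
      by simp
  qed
  ultimately show ?thesis
    using sum_pos2[where I = "{..<n}" and i = j and f = "\<lambda>i. l i * f (x i)"] j(1) by auto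
qed

text \<open>The argument of the inverse in the Bajraktarevic mean is a convex combination of the
  values of \<open>g / f\<close>, with weights \<open>l i * f (x i)\<close>.\<close>
lemma weighted_ratio_mem_image:
  fixes f g :: "real \<Rightarrow> real"
  assumes "is_interval ((\<lambda>t. g t / f t) ` I)" "\<And>y. y \<in> I \<Longrightarrow> 0 < f y"
    and x: "in_power I n x" and l: "Lambda n l"
  shows "(\<Sum>i<n. l i * g (x i)) / (\<Sum>i<n. l i * f (x i)) \<in> (\<lambda>t. g t / f t) ` I"
proof -
  define S where "S = (\<Sum>i<n. l i * f (x i))"
  have S: "0 < S"
    unfolding S_def using Lambda_weighted_sum_pos l x assms(2) .
  have "(\<Sum>i<n. (l i * f (x i) / S) *\<^sub>R (g (x i) / f (x i))) \<in> (\<lambda>t. g t / f t) ` I"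
  proof (rule convex_sum)
    show "convex ((\<lambda>t. g t / f t) ` I)"
      using assms(1) by (simp add: is_interval_convex_1)
    show "(\<Sum>i<n. l i * f (x i) / S) = 1"
      using S by (simp add: S_def flip: sum_divide_distrib)
    show "0 \<le> l i * f (x i) / S" if "i \<in> {..<n}" for i
      using that x l assms(2) S by (auto simp: Lambda_def in_power_def less_imp_le)
  qed (use x in \<open>auto simp: in_power_def\<close>)
  moreover have "(\<Sum>i<n. (l i * f (x i) / S) *\<^sub>R (g (x i) / f (x i))) = (\<Sum>i<n. l i * g (x i)) / S"
    unfolding sum_divide_distrib using x assms(2)
    by (intro sum.cong) (auto simp: in_power_def less_imp_neq[symmetric])
  ultimately show ?thesis
    by (simp add: S_def)
qed

lemma Amean_eq_Bmean_one: "Amean I h n x l = Bmean I h (\<lambda>_. 1) n x l"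
  by (simp add: Amean_def Bmean_def)

lemma sum_lessThan_2: "(\<Sum>i<2. u i) = u 0 + u (Suc 0)"
  by (simp add: numeral_2_eq_2)

lemma two_point_mean_balance:
  fixes f g h :: "real \<Rightarrow> real"
  assumes I: "is_interval I" and B: "B0 I f g" and t: "0 < t" "t < 1" and x: "x \<in> I" "y \<in> I"
    and mean: "Bmean I g f 2 (\<lambda>i. if i = 0 then x else y) (\<lambda>i. if i = 0 then t else 1 - t)
      = Amean I h 2 (\<lambda>i. if i = 0 then x else y) (\<lambda>i. if i = 0 then t else 1 - t)"
  defines "m \<equiv> the_inv_into I h (t * h x + (1 - t) * h y)"
  shows "t * f x * (g x / f x - g m / f m) + (1 - t) * f y * (g y / f y - g m / f m) = 0"
proof -
  define \<phi> where "\<phi> u = g u / f u" for u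
  have f: "\<And>u. u \<in> I \<Longrightarrow> 0 < f u" and \<phi>: "cont_strict_mono I \<phi>"
    using B by (auto simp: B0_def \<phi>_def[abs_def])
  define R where "R = (t * g x + (1 - t) * g y) / (t * f x + (1 - t) * f y)"
  have "R \<in> \<phi> ` I"
    using weighted_ratio_mem_image[of g f I 2 "\<lambda>i. if i = 0 then x else y" "\<lambda>i. if i = 0 then t else 1 - t"]
      cont_strict_mono_image_interval[OF I \<phi>] f x t
    by (simp add: R_def \<phi>_def[abs_def] in_power_def Lambda_def sum_lessThan_2 less_Suc_eq)
  moreover have "Bmean I g f 2 (\<lambda>i. if i = 0 then x else y) (\<lambda>i. if i = 0 then t else 1 - t)
      = the_inv_into I \<phi> R"
    by (simp add: Bmean_def sum_lessThan_2 R_def \<phi>_def[abs_def])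
  moreover have "Amean I h 2 (\<lambda>i. if i = 0 then x else y) (\<lambda>i. if i = 0 then t else 1 - t) = m"
    by (simp add: Amean_def sum_lessThan_2 m_def)
  ultimately have "\<phi> m = R"
    using mean f_the_inv_into_f[OF cont_strict_mono_inj_on[OF \<phi>]] by simp
  moreover have "0 < t * f x + (1 - t) * f y"
    using f x t by (simp add: add_pos_pos)
  ultimately have "\<phi> m * (t * f x + (1 - t) * f y) = t * g x + (1 - t) * g y"
    by (simp add: R_def)
  moreover have "t * f x * (g x / f x - \<phi> m) + (1 - t) * f y * (g y / f y - \<phi> m)
      = (t * g x + (1 - t) * g y) - \<phi> m * (t * f x + (1 - t) * f y)"
    using f[OF x(1)] f[OF x(2)] by (simp add: algebra_simps)
  ultimately show ?thesis
    by (simp add: \<phi>_def)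
qed

lemma transported_mean_balance:
  fixes f g h :: "real \<Rightarrow> real"
  assumes I: "is_interval I" and B: "B0 I f g" and h: "cont_strict_mono I h" and t: "0 < t" "t < 1"
    and mean: "\<And>x. in_power I 2 x \<Longrightarrow>
      Bmean I g f 2 x (\<lambda>i. if i = 0 then t else 1 - t) = Amean I h 2 x (\<lambda>i. if i = 0 then t else 1 - t)"
    and pq: "p \<in> h ` I" "q \<in> h ` I"
  defines "hinv \<equiv> the_inv_into I h"
  shows "t * f (hinv p) * (g (hinv p) / f (hinv p) - g (hinv (t * p + (1 - t) * q)) / f (hinv (t * p + (1 - t) * q)))
    + (1 - t) * f (hinv q) * (g (hinv q) / f (hinv q) - g (hinv (t * p + (1 - t) * q)) / f (hinv (t * p + (1 - t) * q)))
    = 0"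
proof -
  have hinv: "hinv u \<in> I" "h (hinv u) = u" if "u \<in> h ` I" for u
    using that the_inv_into_into f_the_inv_into_f cont_strict_mono_inj_on[OF h]
    unfolding hinv_def by fastforce+
  have "in_power I 2 (\<lambda>i. if i = 0 then hinv p else hinv q)"
    using hinv(1) pq by (simp add: in_power_def less_Suc_eq numeral_2_eq_2)
  moreover have "the_inv_into I h (t * h (hinv p) + (1 - t) * h (hinv q)) = hinv (t * p + (1 - t) * q)"
    unfolding hinv(2)[OF pq(1)] hinv(2)[OF pq(2)] by (simp add: hinv_def)
  ultimately show ?thesis
    using two_point_mean_balance[OF I B t hinv(1)[OF pq(1)] hinv(1)[OF pq(2)] mean] by simp
qed

lemma v_imp_vi:
  assumes I: "is_interval I" "open I" "I \<noteq> {}" and B: "B0 I f g" and "stmt_v I f g"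
  shows "stmt_vi I f g"
proof -
  obtain t h where "t \<in> {0<..<1/2} \<union> {1/2<..<1}" and h: "cont_strict_mono I h"
    and mean: "\<And>x. in_power I 2 x \<Longrightarrow>
      Bmean I g f 2 x (\<lambda>i. if i = 0 then t else 1 - t) = Amean I h 2 x (\<lambda>i. if i = 0 then t else 1 - t)"
    using assms(5) unfolding stmt_v_def by blast
  then have t: "0 < t" "t < 1" "t \<noteq> 1 / 2"
    by auto
  define \<phi> where "\<phi> u = g u / f u" for u
  have f: "\<And>u. u \<in> I \<Longrightarrow> 0 < f u" and \<phi>: "cont_strict_mono I \<phi>"
    using B by (auto simp: B0_def \<phi>_def[abs_def])
  define hinv where "hinv = the_inv_into I h"
  have hinv: "hinv u \<in> I" if "u \<in> h ` I" for u
    using that the_inv_into_into cont_strict_mono_inj_on[OF h] unfolding hinv_def by fastforce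
  note r = cont_strict_mono_comp_inverse[OF I(1,2) h \<phi>, folded hinv_def]
  have f_ne: "f (hinv u) \<noteq> 0" if "u \<in> h ` I" for u
    using f hinv that by force
  \<comment> \<open>In the coordinate \<open>u = h x\<close> the quasi-arithmetic mean becomes arithmetic.\<close>
  have balance: "t * f (hinv p) * (\<phi> (hinv p) - \<phi> (hinv (t * p + (1 - t) * q)))
      + (1 - t) * f (hinv q) * (\<phi> (hinv q) - \<phi> (hinv (t * p + (1 - t) * q))) = 0"
    if "p \<in> h ` I" "q \<in> h ` I" for p q
    using transported_mean_balance[OF I(1) B h t(1,2) mean that] unfolding hinv_def \<phi>_def .
  have "h ` I \<noteq> {}"
    using I(3) by blast
  then obtain A B where AB: "\<And>u. u \<in> h ` I \<Longrightarrow> A * f (hinv u) + B * (\<phi> (hinv u) * f (hinv u)) = 1"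
    using balance_imp_affine_relation[OF cont_strict_mono_image_interval[OF I(1) h]
        cont_strict_mono_image_open[OF I(1) h I(2) subset_refl] _ t f_ne r balance]
    by blast
  show ?thesis
    unfolding stmt_vi_def
  proof (intro exI ballI)
    fix x
    assume "x \<in> I"
    then show "A * f x + B * g x = 1"
      using AB[of "h x"] the_inv_into_f_f[OF cont_strict_mono_inj_on[OF h]] f[of x]
      by (simp add: \<phi>_def hinv_def)
  qed
qed

lemma cont_strict_mono_comonotone:
  assumes "cont_strict_mono I \<phi>" "continuous_on I h"
    and same_sign: "\<And>x y. x \<in> I \<Longrightarrow> y \<in> I \<Longrightarrow> \<exists>c>0. h y - h x = c * (\<phi> y - \<phi> x)"
  shows "cont_strict_mono I h"
proof -
  have "h x < h y \<longleftrightarrow> \<phi> x < \<phi> y" if xy: "x \<in> I" "y \<in> I" for x y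
  proof -
    obtain c where "0 < c" "h y - h x = c * (\<phi> y - \<phi> x)"
      using same_sign[OF xy] by blast
    then show ?thesis
      by (smt (verit) mult_pos_pos mult_nonneg_nonpos)
  qed
  then show ?thesis
    using assms(1,2) unfolding cont_strict_mono_def monotone_on_def by auto
qed

lemma affine_relation_cont_strict_mono:
  assumes B: "B0 I f g" and ab: "\<And>y. y \<in> I \<Longrightarrow> a * f y + b * g y = 1"
  shows "cont_strict_mono I (\<lambda>y. a * g y - b * f y)"
proof (rule cont_strict_mono_comonotone)
  define \<phi> where "\<phi> y = g y / f y" for y
  have f: "\<And>y. y \<in> I \<Longrightarrow> 0 < f y" and \<phi>: "cont_strict_mono I \<phi>"
    using B by (auto simp: B0_def \<phi>_def[abs_def])
  then show "cont_strict_mono I (\<lambda>y. g y / f y)"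
    by (simp add: \<phi>_def[abs_def])
  have f_eq: "f y = 1 / (a + b * \<phi> y)" and den: "0 < a + b * \<phi> y" if "y \<in> I" for y
  proof -
    have "a + b * \<phi> y = 1 / f y"
      using ab[OF that] f[OF that] by (simp add: \<phi>_def field_simps)
    then show "0 < a + b * \<phi> y" "f y = 1 / (a + b * \<phi> y)"
      using f[OF that] by simp_all
  qed
  have "a + b * \<phi> y \<noteq> 0" if "y \<in> I" for y
    using den[OF that] by simp
  moreover have "continuous_on I \<phi>"
    using \<phi> by (simp add: cont_strict_mono_def)
  ultimately have "continuous_on I (\<lambda>y. (a * \<phi> y - b) / (a + b * \<phi> y))"
    by (intro continuous_intros) auto
  moreover have "(a * \<phi> y - b) / (a + b * \<phi> y) = a * g y - b * f y" if "y \<in> I" for y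
  proof -
    have "g y = \<phi> y * f y"
      using f[OF that] by (simp add: \<phi>_def)
    then show ?thesis
      using f_eq[OF that] by (simp add: diff_divide_distrib)
  qed
  ultimately show "continuous_on I (\<lambda>y. a * g y - b * f y)"
    by (rule continuous_on_eq)
  fix x y
  assume xy: "x \<in> I" "y \<in> I"
  have "a \<noteq> 0 \<or> b \<noteq> 0"
    using ab[OF xy(1)] by auto
  then have "0 < (a\<^sup>2 + b\<^sup>2) * (f x * f y)"
    using f xy by (simp add: sum_power2_gt_zero_iff)
  moreover have "(a * g y - b * f y) - (a * g x - b * f x) = (a\<^sup>2 + b\<^sup>2) * (f x * f y) * (g y / f y - g x / f x)"
    using ab[OF xy(1)] ab[OF xy(2)] f[OF xy(1)] f[OF xy(2)]
    by (simp add: field_simps power2_eq_square) algebra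
  ultimately show "\<exists>c>0. (a * g y - b * f y) - (a * g x - b * f x) = c * (g y / f y - g x / f x)"
    by blast
qed

lemma affine_relation_weighted_sums:
  fixes f g :: "real \<Rightarrow> real"
  assumes ab: "\<And>y. y \<in> I \<Longrightarrow> a * f y + b * g y = 1" and x: "in_power I n x"
  shows "a * (\<Sum>i<n. l i * f (x i)) + b * (\<Sum>i<n. l i * g (x i)) = (\<Sum>i<n. l i)"
proof -
  have "a * (\<Sum>i<n. l i * f (x i)) + b * (\<Sum>i<n. l i * g (x i))
      = (\<Sum>i<n. l i * (a * f (x i) + b * g (x i)))"
    by (simp add: distrib_left sum.distrib sum_distrib_left mult.left_commute)
  also have "\<dots> = (\<Sum>i<n. l i)"
    using ab x by (simp add: in_power_def)
  finally show ?thesis .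
qed

text \<open>These values make the Bajraktarevic mean also the quasi-arithmetic mean generated by any
  linear combination of \<open>f\<close> and \<open>g\<close>.\<close>
lemma affine_relation_Bmean_values:
  assumes I: "is_interval I" and B: "B0 I f g" and ab: "\<And>y. y \<in> I \<Longrightarrow> a * f y + b * g y = 1"
    and x: "in_power I n x" and l: "Lambda n l"
  defines "y \<equiv> Bmean I g f n x l"
  shows "y \<in> I" "f y = (\<Sum>i<n. l i * f (x i)) / (\<Sum>i<n. l i)" "g y = (\<Sum>i<n. l i * g (x i)) / (\<Sum>i<n. l i)"
proof -
  define \<phi> where "\<phi> y = g y / f y" for y
  have f: "\<And>y. y \<in> I \<Longrightarrow> 0 < f y" and \<phi>: "cont_strict_mono I \<phi>"
    using B by (auto simp: B0_def \<phi>_def[abs_def])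
  define S Sf Sg where "S = (\<Sum>i<n. l i)" and "Sf = (\<Sum>i<n. l i * f (x i))"
    and "Sg = (\<Sum>i<n. l i * g (x i))"
  have Sf: "0 < Sf"
    unfolding Sf_def using Lambda_weighted_sum_pos[OF l x f] .
  have "Sg / Sf \<in> \<phi> ` I"
    unfolding Sf_def Sg_def \<phi>_def[abs_def]
    using weighted_ratio_mem_image[OF _ f x l] cont_strict_mono_image_interval[OF I \<phi>]
    by (simp add: \<phi>_def[abs_def])
  moreover have "y = the_inv_into I \<phi> (Sg / Sf)"
    by (simp add: y_def Bmean_def Sf_def Sg_def \<phi>_def[abs_def])
  ultimately have y: "y \<in> I" "\<phi> y = Sg / Sf"
    using the_inv_into_into f_the_inv_into_f cont_strict_mono_inj_on[OF \<phi>] by fastforce+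
  have "g y * Sf = Sg * f y"
    using y(2) f[OF y(1)] Sf by (simp add: \<phi>_def field_simps)
  then have "f y * (a * Sf + b * Sg) = Sf * (a * f y + b * g y)"
    by algebra
  moreover have "a * Sf + b * Sg = S"
    unfolding S_def Sf_def Sg_def using affine_relation_weighted_sums[OF ab x] .
  ultimately have "f y * S = Sf"
    using ab[OF y(1)] by simp
  then show "y \<in> I" "f y = Sf / S" "g y = Sg / S"
    using y Sf f[OF y(1)] by (auto simp: \<phi>_def field_simps)
qed

lemma affine_relation_Bmean_eq_Amean:
  assumes I: "is_interval I" and B: "B0 I f g" and ab: "\<And>y. y \<in> I \<Longrightarrow> a * f y + b * g y = 1"
    and x: "in_power I n x" and l: "Lambda n l"
  shows "Bmean I g f n x l = Amean I (\<lambda>y. a * g y - b * f y) n x l"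
proof -
  define y where "y = Bmean I g f n x l"
  note y = affine_relation_Bmean_values[OF I B ab x l, folded y_def]
  have "a * g y - b * f y = (\<Sum>i<n. l i * (a * g (x i) - b * f (x i))) / (\<Sum>i<n. l i)"
    by (simp add: y right_diff_distrib sum_subtractf sum_distrib_left diff_divide_distrib
        mult.left_commute)
  then have "Amean I (\<lambda>y. a * g y - b * f y) n x l = y"
    unfolding Amean_def
    using the_inv_into_f_f[OF cont_strict_mono_inj_on[OF affine_relation_cont_strict_mono[OF B ab]] y(1)]
    by simp
  then show ?thesis
    by (simp add: y_def)
qed

lemma vi_imp_i:
  assumes "is_interval I" "B0 I f g" "stmt_vi I f g"
  shows "stmt_i I f g"
proof -
  obtain a b where ab: "\<And>y. y \<in> I \<Longrightarrow> a * f y + b * g y = 1"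
    using assms(3) unfolding stmt_vi_def by blast
  then show ?thesis
    unfolding stmt_i_def
    using affine_relation_cont_strict_mono[OF assms(2) ab] affine_relation_Bmean_eq_Amean[OF assms(1,2) ab]
    by blast
qed

lemma Bmean_scale_weights:
  assumes "c \<noteq> 0"
  shows "Bmean I g f n x (\<lambda>i. c * l i) = Bmean I g f n x l"
  using assms by (simp add: Bmean_def mult.assoc flip: sum_distrib_left)

lemma Amean_scale_weights: "c \<noteq> 0 \<Longrightarrow> Amean I h n x (\<lambda>i. c * l i) = Amean I h n x l"
  by (simp add: Amean_eq_Bmean_one Bmean_scale_weights)

lemma sum_lessThan_repeat_last:
  fixes w :: "'a \<Rightarrow> real"
  assumes "1 \<le> n"
  shows "(\<Sum>i<n. w (if i < n - 1 then a else b)) = real (n - 1) * w a + w b"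
proof -
  obtain m where "n = Suc m"
    using assms by (cases n) auto
  then show ?thesis
    by (simp cong: sum.cong_simp)
qed

lemma Bmean_repeat_first:
  assumes "1 \<le> n"
  shows "Bmean I g f n (\<lambda>i. if i < n - 1 then x 0 else x 1) (\<lambda>_. 1)
    = Bmean I g f 2 x (\<lambda>i. if i = 0 then real (n - 1) else 1)"
  using sum_lessThan_repeat_last[OF assms, of g "x 0" "x 1"]
    sum_lessThan_repeat_last[OF assms, of f "x 0" "x 1"]
  by (simp add: Bmean_def sum_lessThan_2)

lemma Amean_repeat_first:
  assumes "1 \<le> n"
  shows "Amean I h n (\<lambda>i. if i < n - 1 then x 0 else x 1) (\<lambda>_. 1)
    = Amean I h 2 x (\<lambda>i. if i = 0 then real (n - 1) else 1)"
  unfolding Amean_eq_Bmean_one by (rule Bmean_repeat_first[OF assms])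

text \<open>Repeating \<open>x 0\<close> \<open>n - 1\<close> times turns the unweighted \<open>n\<close>-variable means into
  two-variable means with weights \<open>(n - 1) / n\<close> and \<open>1 / n\<close>.\<close>
lemma iii_imp_v: "stmt_iii I f g \<Longrightarrow> stmt_v I f g"
proof -
  assume "stmt_iii I f g"
  then obtain h n where h: "cont_strict_mono I h" and n: "3 \<le> n"
    and mean: "\<And>x. in_power I n x \<Longrightarrow> Bmean I g f n x (\<lambda>_. 1) = Amean I h n x (\<lambda>_. 1)"
    unfolding stmt_iii_def by blast
  define t where "t = real (n - 1) / real n"
  have "t \<in> {0<..<1/2} \<union> {1/2<..<1}"
    using n by (auto simp: t_def field_simps of_nat_diff)
  moreover have weights: "(\<lambda>i. if i = 0 then real (n - 1) else 1) = (\<lambda>i. real n * (if i = 0 then t else 1 - t))"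
    using n by (auto simp: t_def field_simps of_nat_diff)
  moreover have "Bmean I g f 2 x (\<lambda>i. if i = 0 then t else 1 - t) = Amean I h 2 x (\<lambda>i. if i = 0 then t else 1 - t)"
    if "in_power I 2 x" for x
  proof -
    have "in_power I n (\<lambda>i. if i < n - 1 then x 0 else x 1)"
      using that by (simp add: in_power_def)
    then have "Bmean I g f 2 x (\<lambda>i. if i = 0 then real (n - 1) else 1)
        = Amean I h 2 x (\<lambda>i. if i = 0 then real (n - 1) else 1)"
      using mean Bmean_repeat_first[of n I g f x] Amean_repeat_first[of n I h x] n by simp
    then show ?thesis
      unfolding weights using n by (simp add: Bmean_scale_weights Amean_scale_weights)
  qed
  ultimately show "stmt_v I f g"
    unfolding stmt_v_def using h by blast
qed

lemma i_imp_ii: "stmt_i I f g \<Longrightarrow> stmt_ii I f g"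
  unfolding stmt_i_def stmt_ii_def Lambda_def by fastforce

lemma ii_imp_iii: "stmt_ii I f g \<Longrightarrow> stmt_iii I f g"
  unfolding stmt_ii_def stmt_iii_def by (meson one_le_numeral order_refl)

lemma i_imp_iv: "stmt_i I f g \<Longrightarrow> stmt_iv I f g"
  unfolding stmt_i_def stmt_iv_def by fastforce

lemma iv_imp_v: "stmt_iv I f g \<Longrightarrow> stmt_v I f g"
proof -
  assume "stmt_iv I f g"
  moreover have "Lambda 2 (\<lambda>i. if i = 0 then 1 / 3 else 1 - 1 / 3)"
    by (simp add: Lambda_def sum_lessThan_2)
  ultimately show "stmt_v I f g"
    unfolding stmt_iv_def stmt_v_def by (intro exI[of _ "1 / 3"]) auto
qed

section \<open>The twice differentiable case\<close>

lemma C2_on_has_derivatives: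
  assumes "C2_on I f" "x \<in> I"
  shows "(f has_real_derivative deriv f x) (at x)"
    and "(deriv f has_real_derivative deriv (deriv f) x) (at x)"
  using assms unfolding C2_on_def by (simp_all add: DERIV_deriv_iff_real_differentiable)

lemma W_1_0: "W 1 0 f g x = deriv f x * g x - f x * deriv g x"
  by (simp add: W_def)

lemma W_2_1: "W 2 1 f g x = deriv (deriv f) x * deriv g x - deriv f x * deriv (deriv g) x"
  by (simp add: W_def numeral_2_eq_2)

lemma B2_W_1_0_nonzero:
  assumes B: "B2 I f g" and x: "x \<in> I"
  shows "W 1 0 f g x \<noteq> 0"
proof
  assume W: "W 1 0 f g x = 0"
  have f: "0 < f x" and C2: "C2_on I f" "C2_on I g"
    using B x by (auto simp: B2_def)
  have "((\<lambda>t. g t / f t) has_real_derivative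
      (deriv g x * f x - g x * deriv f x) / (f x * f x)) (at x)"
    using C2_on_has_derivatives(1)[OF C2(2) x] C2_on_has_derivatives(1)[OF C2(1) x] f
    by (intro DERIV_divide) auto
  then have "deriv (\<lambda>t. g t / f t) x = - W 1 0 f g x / (f x * f x)"
    unfolding W_1_0 by (simp add: DERIV_imp_deriv algebra_simps)
  then show False
    using B x W unfolding B2_def by simp
qed

lemma det_eq_0_if_common_kernel:
  fixes a b p q r s :: real
  assumes "a * p + b * q = 0" "a * r + b * s = 0" "a \<noteq> 0 \<or> b \<noteq> 0"
  shows "p * s - q * r = 0"
proof -
  have "a * (p * s - q * r) = 0" "b * (p * s - q * r) = 0"
    using assms(1,2) by algebra+
  then show ?thesis
    using assms(3) by auto
qed

lemma derivative_zero_if_constant_on_open: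
  fixes k :: "real \<Rightarrow> real"
  assumes "(k has_real_derivative D) (at x)" "open I" "x \<in> I" "\<And>y. y \<in> I \<Longrightarrow> k y = c"
  shows "D = 0"
proof -
  have "((\<lambda>_. c) has_real_derivative D) (at x)"
    using has_field_derivative_transform_within_open[OF assms(1-3)] assms(4) by simp
  then show ?thesis
    using DERIV_const DERIV_unique by blast
qed

lemma affine_relation_imp_W_2_1_zero:
  assumes I: "open I" and B: "B2 I f g" and ab: "\<And>y. y \<in> I \<Longrightarrow> a * f y + b * g y = 1"
    and x: "x \<in> I"
  shows "W 2 1 f g x = 0"
proof -
  have C2: "C2_on I f" "C2_on I g"
    using B by (auto simp: B2_def)
  note D = C2_on_has_derivatives[OF C2(1)] C2_on_has_derivatives[OF C2(2)]
  have first: "a * deriv f y + b * deriv g y = 0" if "y \<in> I" for y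
    using D(1,3)[OF that] I that ab
    by (intro derivative_zero_if_constant_on_open[of "\<lambda>y. a * f y + b * g y"])
      (auto intro!: derivative_eq_intros)
  have "a * deriv (deriv f) x + b * deriv (deriv g) x = 0"
    using D(2,4)[OF x] I x first
    by (intro derivative_zero_if_constant_on_open[of "\<lambda>y. a * deriv f y + b * deriv g y"])
      (auto intro!: derivative_eq_intros)
  moreover have "a \<noteq> 0 \<or> b \<noteq> 0"
    using ab[OF x] by auto
  ultimately have "deriv f x * deriv (deriv g) x - deriv g x * deriv (deriv f) x = 0"
    using first[OF x] by (rule det_eq_0_if_common_kernel[rotated])
  then show ?thesis
    unfolding W_2_1 by (simp add: algebra_simps)
qed

text \<open>If \<open>F' G - F G'\<close> vanishes, the direction of the nowhere vanishing vector \<open>(F, G)\<close>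
  is constant: the square of its component orthogonal to \<open>(F x0, G x0)\<close>, divided
  by \<open>F\<^sup>2 + G\<^sup>2\<close>, has zero derivative.\<close>
lemma wronskian_zero_imp_constant_direction:
  fixes F G F' G' :: "real \<Rightarrow> real"
  assumes I: "is_interval I"
    and D: "\<And>x. x \<in> I \<Longrightarrow> (F has_real_derivative F' x) (at x)"
      "\<And>x. x \<in> I \<Longrightarrow> (G has_real_derivative G' x) (at x)"
    and nonzero: "\<And>x. x \<in> I \<Longrightarrow> F x \<noteq> 0 \<or> G x \<noteq> 0"
    and W: "\<And>x. x \<in> I \<Longrightarrow> F' x * G x - F x * G' x = 0"
    and x0: "x0 \<in> I" and y: "y \<in> I"
  shows "G x0 * F y - F x0 * G y = 0"
proof -
  define k where "k x = G x0 * F x - F x0 * G x" for x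
  define N where "N x = F x ^ 2 + G x ^ 2" for x
  have N: "0 < N x" if "x \<in> I" for x
    using nonzero[OF that] by (auto simp: N_def sum_power2_gt_zero_iff)
  have "((\<lambda>x. k x ^ 2 / N x) has_real_derivative 0) (at x within I)" if x: "x \<in> I" for x
  proof -
    have "(k has_real_derivative G x0 * F' x - F x0 * G' x) (at x)"
      unfolding k_def[abs_def] using D[OF x] by (auto intro!: derivative_eq_intros)
    then have "((\<lambda>x. k x ^ 2) has_real_derivative 2 * k x * (G x0 * F' x - F x0 * G' x)) (at x)"
      by (auto intro!: derivative_eq_intros)
    moreover have "(N has_real_derivative 2 * F x * F' x + 2 * G x * G' x) (at x)"
      unfolding N_def[abs_def] using D[OF x] by (auto intro!: derivative_eq_intros)
    ultimately have "((\<lambda>x. k x ^ 2 / N x) has_real_derivative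
        (2 * k x * (G x0 * F' x - F x0 * G' x) * N x - k x ^ 2 * (2 * F x * F' x + 2 * G x * G' x))
          / (N x * N x)) (at x)"
      using N[OF x] by (intro DERIV_divide) auto
    moreover have "2 * k x * (G x0 * F' x - F x0 * G' x) * N x - k x ^ 2 * (2 * F x * F' x + 2 * G x * G' x)
        = 2 * k x * (G x0 * G x + F x0 * F x) * (F' x * G x - F x * G' x)"
      unfolding k_def N_def power2_eq_square by algebra
    ultimately show ?thesis
      using W[OF x] by (simp add: has_field_derivative_at_within)
  qed
  moreover have "convex I"
    using I by (simp add: is_interval_convex_1)
  ultimately obtain c where c: "\<And>x. x \<in> I \<Longrightarrow> k x ^ 2 / N x = c"
    using has_field_derivative_zero_constant[of I "\<lambda>x. k x ^ 2 / N x"] by blast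
  have "k x0 = 0"
    by (simp add: k_def)
  then have "k y ^ 2 / N y = 0"
    using c[OF x0] c[OF y] by simp
  then show ?thesis
    using N[OF y] by (simp add: k_def)
qed

lemma W_2_1_zero_imp_affine_relation:
  assumes I: "is_interval I" "I \<noteq> {}" and B: "B2 I f g"
    and W: "\<And>x. x \<in> I \<Longrightarrow> W 2 1 f g x = 0"
  obtains a b where "\<And>x. x \<in> I \<Longrightarrow> a * f x + b * g x = 1"
proof -
  have C2: "C2_on I f" "C2_on I g"
    using B by (auto simp: B2_def)
  note D = C2_on_has_derivatives[OF C2(1)] C2_on_has_derivatives[OF C2(2)]
  have W10: "deriv f x * g x - f x * deriv g x \<noteq> 0" if "x \<in> I" for x
    using B2_W_1_0_nonzero[OF B that] unfolding W_1_0 .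
  obtain x0 where x0: "x0 \<in> I"
    using I(2) by blast
  define p q where "p = deriv g x0" and "q = - deriv f x0"
  have nonzero: "deriv f x \<noteq> 0 \<or> deriv g x \<noteq> 0" if "x \<in> I" for x
    using W10[OF that] by auto
  have W21: "deriv (deriv f) x * deriv g x - deriv f x * deriv (deriv g) x = 0" if "x \<in> I" for x
    using W[OF that] unfolding W_2_1 .
  have pq: "p * deriv f y + q * deriv g y = 0" if "y \<in> I" for y
    using wronskian_zero_imp_constant_direction[OF I(1) D(2) D(4) nonzero W21 x0 that]
    unfolding p_def q_def by simp
  have "((\<lambda>y. p * f y + q * g y) has_real_derivative 0) (at y within I)" if "y \<in> I" for y
  proof -
    have "((\<lambda>y. p * f y + q * g y) has_real_derivative p * deriv f y + q * deriv g y) (at y)"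
      using D(1,3)[OF that] by (auto intro!: derivative_eq_intros)
    then show ?thesis
      using pq[OF that] by (simp add: has_field_derivative_at_within)
  qed
  moreover have "convex I"
    using I(1) by (simp add: is_interval_convex_1)
  ultimately obtain c where c: "\<And>y. y \<in> I \<Longrightarrow> p * f y + q * g y = c"
    using has_field_derivative_zero_constant[of I "\<lambda>y. p * f y + q * g y"] by blast
  have "c \<noteq> 0"
  proof
    assume "c = 0"
    moreover have "p \<noteq> 0 \<or> q \<noteq> 0"
      using W10[OF x0] by (auto simp: p_def q_def)
    ultimately have "f x0 * deriv g x0 - g x0 * deriv f x0 = 0"
      using c[OF x0] pq[OF x0] by (intro det_eq_0_if_common_kernel) auto
    then show False
      using W10[OF x0] by (simp add: algebra_simps)
  qed
  then show ?thesis
    using that[of "p / c" "q / c"] c by (simp add: add_divide_distrib[symmetric])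
qed

lemma B2_vi_iff_vii:
  assumes I: "open I" "is_interval I" "I \<noteq> {}" and B: "B2 I f g"
  shows "stmt_vi I f g \<longleftrightarrow> stmt_vii I f g"
proof -
  have "Psi f g x = 0 \<longleftrightarrow> W 2 1 f g x = 0" if "x \<in> I" for x
    using B2_W_1_0_nonzero[OF B that] by (simp add: Psi_def)
  moreover have "stmt_vi I f g \<longleftrightarrow> (\<forall>x\<in>I. W 2 1 f g x = 0)"
  proof
    assume "stmt_vi I f g"
    then show "\<forall>x\<in>I. W 2 1 f g x = 0"
      unfolding stmt_vi_def using affine_relation_imp_W_2_1_zero[OF I(1) B] by blast
  next
    assume "\<forall>x\<in>I. W 2 1 f g x = 0"
    then show "stmt_vi I f g"
      unfolding stmt_vi_def using W_2_1_zero_imp_affine_relation[OF I(2,3) B] by metis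
  qed
  ultimately show ?thesis
    unfolding stmt_vii_def by blast
qed

theorem theorem3p4:
  fixes I :: "real set" and f g :: "real \<Rightarrow> real"
  assumes "is_interval I" and "open I" and "I \<noteq> {}"
    and "B0 I f g"
  shows "(stmt_i I f g \<longleftrightarrow> stmt_ii I f g) \<and> (stmt_ii I f g \<longleftrightarrow> stmt_iii I f g)
       \<and> (stmt_iii I f g \<longleftrightarrow> stmt_iv I f g) \<and> (stmt_iv I f g \<longleftrightarrow> stmt_v I f g)
       \<and> (stmt_v I f g \<longleftrightarrow> stmt_vi I f g)
       \<and> (B2 I f g \<longrightarrow> (stmt_vi I f g \<longleftrightarrow> stmt_vii I f g))"
  using i_imp_ii ii_imp_iii iii_imp_v v_imp_vi[OF assms] vi_imp_i[OF assms(1,4)]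
    i_imp_iv iv_imp_v B2_vi_iff_vii[OF assms(2,1,3)]
  by blast

end
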